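(* Let $\mathcal{A}$ be an abelian group. Let $M_{12}(p_1,p_2)$ be the graph with vertices $v_1,\dots,v_5$ and edges $v_1v_2$, $v_2v_3$, $v_2v_4$, $v_2v_5$, $v_3v_4$, $v_4v_5$, together with $p_1\ge 1$ pendant vertices adjacent to $v_1$ and $p_2\ge0$ pendant vertices adjacent to $v_2$. Then $M_{12}(p_1,p_2)$ is $\mathcal{A}$-vertex magic if and only if $p_2=0$, $\mathcal{A}$ contains an involution $h$, and there exist $g_1,g_2\in\mathcal{A}\setminus\{0\}$ with $g_1+g_2=h$.
   Context: An involution is an element of order $2$. A map $\ell:V(G)\to\mathcal{A}\setminus\{0\}$ is an $\mathcal{A}$-vertex magic labeling if there is $\mu\in\mathcal{A}$ with $\sum_{u\in N(v)}\ell(u)=\mu$ for every vertex $v$; $G$ is $\mathcal{A}$-vertex magic if such a labeling exists. A pendant vertex has degree $1$. *)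

theory Defs
  imports Main
begin

(* A finite simple graph is given by a vertex set V and a symmetric, irreflexive
   adjacency relation E.  The open neighbourhood of v is {u \<in> V. E v u}. *)

definition nbhd :: "'v set \<Rightarrow> ('v \<Rightarrow> 'v \<Rightarrow> bool) \<Rightarrow> 'v \<Rightarrow> 'v set" where
  "nbhd V E v = {u \<in> V. E v u}"

definition vertex_magic_labeling ::
  "'v set \<Rightarrow> ('v \<Rightarrow> 'v \<Rightarrow> bool) \<Rightarrow> ('v \<Rightarrow> 'a::ab_group_add) \<Rightarrow> bool" where
  "vertex_magic_labeling V E l \<longleftrightarrow>
     (\<forall>v\<in>V. l v \<noteq> 0) \<and> (\<exists>\<mu>. \<forall>v\<in>V. (\<Sum>u\<in>nbhd V E v. l u) = \<mu>)"

definition vertex_magic ::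
  "'a::ab_group_add itself \<Rightarrow> 'v set \<Rightarrow> ('v \<Rightarrow> 'v \<Rightarrow> bool) \<Rightarrow> bool" where
  "vertex_magic _ V E \<longleftrightarrow> (\<exists>l :: 'v \<Rightarrow> 'a. vertex_magic_labeling V E l)"

definition involution :: "'a::ab_group_add \<Rightarrow> bool" where
  "involution h \<longleftrightarrow> h \<noteq> 0 \<and> h + h = 0"

(* Vertices of M_12(p1,p2): core vertices Core 1..Core 5, pendants P1 j (j < p1)
   attached to Core 1 and pendants P2 j (j < p2) attached to Core 2. *)
datatype mvtx = Core nat | P1 nat | P2 nat

definition M12_V :: "nat \<Rightarrow> nat \<Rightarrow> mvtx set" where
  "M12_V p1 p2 = Core ` {1..5} \<union> P1 ` {..<p1} \<union> P2 ` {..<p2}"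

definition M12_base_edge :: "mvtx \<Rightarrow> mvtx \<Rightarrow> bool" where
  "M12_base_edge x y \<longleftrightarrow>
     (x, y) \<in> {(Core 1, Core 2), (Core 2, Core 3), (Core 2, Core 4), (Core 2, Core 5),
               (Core 3, Core 4), (Core 4, Core 5)}
     \<or> (\<exists>j. x = Core 1 \<and> y = P1 j)
     \<or> (\<exists>j. x = Core 2 \<and> y = P2 j)"

definition M12_E :: "mvtx \<Rightarrow> mvtx \<Rightarrow> bool" where
  "M12_E x y \<longleftrightarrow> M12_base_edge x y \<or> M12_base_edge y x"

end

theory Submission
  imports Defs
begin

(* Necessity: the pendants at v1 force l v1 = mu, so a pendant at v2 would force l v2 = mu
   and then l v4 = 0 from the neighbourhood of v3.  With p2 = 0, comparing the neighbourhoods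
   of v1 and v2 gives l v3 + l v4 + l v5 = 0, and comparing those of v3 and v4 gives
   l v3 + l v5 = l v4; hence h = l v4 is an involution split as l v3 + l v5.
   Sufficiency: label v1, ..., v5 by g1 + h, g1, g1, h, g2 and the pendants at v1 by nonzero
   elements summing to h; every neighbourhood then sums to g1 + h. *)

lemma involution_iff_neg: "involution h \<longleftrightarrow> h \<noteq> 0 \<and> - h = h"
  by (auto simp: involution_def add_eq_0_iff)

lemma involution_sum_of_nonzero:
  fixes h g1 g2 :: "'a::ab_group_add"
    and n :: nat
  assumes "involution h" "g1 \<noteq> 0" "g2 \<noteq> 0" "g1 + g2 = h" "n \<ge> 1"
  shows "\<exists>f. (\<forall>j. f j \<noteq> 0) \<and> (\<Sum>j<n. f j) = h"
  using \<open>n \<ge> 1\<close>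
proof (induction n rule: nat_induct2)
  case 0
  then show ?case by simp
next
  case 1
  show ?case
    using \<open>involution h\<close> by (intro exI[of _ "\<lambda>_. h"]) (simp add: involution_def)
next
  case (step n)
  show ?case
  proof (cases "n = 0")
    case True
    show ?thesis
      using True assms(2-4)
      by (intro exI[of _ "\<lambda>j. if j = 0 then g1 else g2"]) (simp add: numeral_2_eq_2)
  next
    case False
    then obtain f where f: "\<forall>j. f j \<noteq> 0" "(\<Sum>j<n. f j) = h"
      using step.IH by auto
    have "(\<Sum>j<n + 2. if j < n then f j else h) = (\<Sum>j<n. f j) + (h + h)"
      by (simp add: numeral_2_eq_2 add.assoc)
    then show ?thesis
      using f \<open>involution h\<close>
      by (intro exI[of _ "\<lambda>j. if j < n then f j else h"]) (simp add: involution_def)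
  qed
qed

lemma M12_V_iff [simp]:
  "Core k \<in> M12_V p1 p2 \<longleftrightarrow> k \<in> {1..5}"
  "P1 j \<in> M12_V p1 p2 \<longleftrightarrow> j < p1"
  "P2 j \<in> M12_V p1 p2 \<longleftrightarrow> j < p2"
  by (auto simp: M12_V_def)

lemma M12_V_cases:
  assumes "v \<in> M12_V p1 p2"
  obtains "v = Core 1" | "v = Core 2" | "v = Core 3" | "v = Core 4" | "v = Core 5"
    | j where "v = P1 j" | j where "v = P2 j" "j < p2"
proof -
  have "{1..5::nat} = {1, 2, 3, 4, 5}"
    by auto
  then show thesis
    using assms that by (auto simp: M12_V_def)
qed

lemma M12_nbhd:
  "nbhd (M12_V p1 p2) M12_E (Core 1) = insert (Core 2) (P1 ` {..<p1})"
  "nbhd (M12_V p1 p2) M12_E (Core 2) = {Core 1, Core 3, Core 4, Core 5} \<union> P2 ` {..<p2}"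
  "nbhd (M12_V p1 p2) M12_E (Core 3) = {Core 2, Core 4}"
  "nbhd (M12_V p1 p2) M12_E (Core 4) = {Core 2, Core 3, Core 5}"
  "nbhd (M12_V p1 p2) M12_E (Core 5) = {Core 2, Core 4}"
  "nbhd (M12_V p1 p2) M12_E (P1 j) = {Core 1}"
  "nbhd (M12_V p1 p2) M12_E (P2 j) = {Core 2}"
  by (auto simp: nbhd_def M12_V_def M12_E_def M12_base_edge_def)

lemma M12_nbhd_sum:
  fixes l :: "mvtx \<Rightarrow> 'a::ab_group_add"
  shows
  "(\<Sum>u\<in>nbhd (M12_V p1 p2) M12_E (Core 1). l u) = l (Core 2) + (\<Sum>j<p1. l (P1 j))"
  "(\<Sum>u\<in>nbhd (M12_V p1 p2) M12_E (Core 2). l u)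
     = l (Core 1) + l (Core 3) + l (Core 4) + l (Core 5) + (\<Sum>j<p2. l (P2 j))"
  "(\<Sum>u\<in>nbhd (M12_V p1 p2) M12_E (Core 3). l u) = l (Core 2) + l (Core 4)"
  "(\<Sum>u\<in>nbhd (M12_V p1 p2) M12_E (Core 4). l u) = l (Core 2) + l (Core 3) + l (Core 5)"
  "(\<Sum>u\<in>nbhd (M12_V p1 p2) M12_E (Core 5). l u) = l (Core 2) + l (Core 4)"
  "(\<Sum>u\<in>nbhd (M12_V p1 p2) M12_E (P1 j). l u) = l (Core 1)"
  "(\<Sum>u\<in>nbhd (M12_V p1 p2) M12_E (P2 j). l u) = l (Core 2)"
  unfolding M12_nbhd
  by (simp_all add: sum.union_disjoint sum.reindex inj_on_def image_iff add.assoc)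

lemma M12_magic_labeling_necessary:
  fixes l :: "mvtx \<Rightarrow> 'a::ab_group_add"
  assumes "p1 \<ge> 1" and "vertex_magic_labeling (M12_V p1 p2) M12_E l"
  shows "p2 = 0" "involution (l (Core 4))" "l (Core 3) \<noteq> 0" "l (Core 5) \<noteq> 0"
    "l (Core 3) + l (Core 5) = l (Core 4)"
proof -
  obtain \<mu> where nonzero: "\<And>v. v \<in> M12_V p1 p2 \<Longrightarrow> l v \<noteq> 0"
    and magic: "\<And>v. v \<in> M12_V p1 p2 \<Longrightarrow> (\<Sum>u\<in>nbhd (M12_V p1 p2) M12_E v. l u) = \<mu>"
    using assms(2) unfolding vertex_magic_labeling_def by blast
  have v1: "l (Core 1) = \<mu>"
    using magic[of "P1 0"] \<open>p1 \<ge> 1\<close> by (simp add: M12_nbhd_sum)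
  have v3: "l (Core 2) + l (Core 4) = \<mu>"
    using magic[of "Core 3"] by (simp add: M12_nbhd_sum)
  have v4: "l (Core 2) + l (Core 3) + l (Core 5) = \<mu>"
    using magic[of "Core 4"] by (simp add: M12_nbhd_sum)
  show "l (Core 3) \<noteq> 0" "l (Core 5) \<noteq> 0"
    using nonzero by simp_all
  have l4: "l (Core 4) \<noteq> 0"
    using nonzero by simp
  show p2: "p2 = 0"
  proof (rule ccontr)
    assume "p2 \<noteq> 0"
    then have "l (Core 2) = \<mu>"
      using magic[of "P2 0"] by (simp add: M12_nbhd_sum)
    with v3 l4 show False by simp
  qed
  have v2: "l (Core 1) + l (Core 3) + l (Core 4) + l (Core 5) = \<mu>"
    using magic[of "Core 2"] p2 by (simp add: M12_nbhd_sum)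
  have "l (Core 2) + (l (Core 3) + l (Core 5)) = l (Core 2) + l (Core 4)"
    using v3 v4 by (simp add: add.assoc)
  then show l4_split: "l (Core 3) + l (Core 5) = l (Core 4)"
    by (rule add_left_imp_eq)
  have "l (Core 1) + (l (Core 4) + (l (Core 3) + l (Core 5))) = l (Core 1) + 0"
    using v1 v2 by (simp add: algebra_simps)
  then have "l (Core 4) + (l (Core 3) + l (Core 5)) = 0"
    by (rule add_left_imp_eq)
  with l4 show "involution (l (Core 4))"
    unfolding involution_def l4_split by blast
qed

lemma M12_magic_labeling_exists:
  fixes h g1 g2 :: "'a::ab_group_add"
  assumes "p1 \<ge> 1" "involution h" "g1 \<noteq> 0" "g2 \<noteq> 0" "g1 + g2 = h"
  shows "\<exists>l :: mvtx \<Rightarrow> 'a. vertex_magic_labeling (M12_V p1 0) M12_E l"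
proof -
  obtain f where f_nonzero: "\<forall>j. f j \<noteq> 0" and f_sum: "(\<Sum>j<p1. f j) = h"
    using involution_sum_of_nonzero[OF assms(2-5,1)] by blast
  have neg_h: "- h = h" and "h \<noteq> 0"
    using \<open>involution h\<close> by (simp_all add: involution_iff_neg)
  have "g1 + h \<noteq> 0"
    using assms(4,5) neg_h by (auto simp: add_eq_0_iff)
  define l :: "mvtx \<Rightarrow> 'a" where
    "l v = (case v of Core k \<Rightarrow> (if k = 1 then g1 + h else if k = 4 then h
               else if k = 5 then g2 else g1)
             | P1 j \<Rightarrow> f j | P2 j \<Rightarrow> h)" for v
  have l_simps: "l (Core 1) = g1 + h" "l (Core 2) = g1" "l (Core 3) = g1" "l (Core 4) = h"
    "l (Core 5) = g2" "l (P1 j) = f j" for j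
    by (simp_all add: l_def)
  have "g1 + h + g1 + h + g2 = g1 + (g1 + g2) + (h + h)"
    by (simp add: algebra_simps)
  also have "\<dots> = g1 + h"
    using assms(2,5) by (simp add: involution_def)
  finally have sum_at_v2: "g1 + h + g1 + h + g2 = g1 + h" .
  have "l v \<noteq> 0 \<and> (\<Sum>u\<in>nbhd (M12_V p1 0) M12_E v. l u) = g1 + h" if "v \<in> M12_V p1 0" for v
    using that
  proof (cases rule: M12_V_cases)
    case 1
    then show ?thesis
      using \<open>g1 + h \<noteq> 0\<close> by (simp only: M12_nbhd_sum l_simps f_sum) simp
  next
    case 2
    then show ?thesis
      using assms(3) by (simp only: M12_nbhd_sum l_simps sum_at_v2 lessThan_0 sum.empty add_0_right) simp
  next
    case 3
    then show ?thesis
      using assms(3) by (simp only: M12_nbhd_sum l_simps) simp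
  next
    case 4
    then show ?thesis
      using \<open>h \<noteq> 0\<close> by (simp only: M12_nbhd_sum l_simps add.assoc assms(5)) simp
  next
    case 5
    then show ?thesis
      using assms(4) by (simp only: M12_nbhd_sum l_simps) simp
  next
    case (6 j)
    then show ?thesis
      using f_nonzero by (simp only: M12_nbhd_sum l_simps) simp
  next
    case (7 j)
    then show ?thesis
      by simp
  qed
  then have "vertex_magic_labeling (M12_V p1 0) M12_E l"
    unfolding vertex_magic_labeling_def by (auto intro!: exI[of _ "g1 + h"])
  then show ?thesis by blast
qed

theorem proposition4p10:
  fixes p1 p2 :: nat
  assumes "p1 \<ge> 1"
  shows "vertex_magic TYPE('a::ab_group_add) (M12_V p1 p2) M12_E \<longleftrightarrow>
           p2 = 0 \<and> (\<exists>h::'a. involution h \<and>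
              (\<exists>g1 g2::'a. g1 \<noteq> 0 \<and> g2 \<noteq> 0 \<and> g1 + g2 = h))"
proof
  assume "vertex_magic TYPE('a::ab_group_add) (M12_V p1 p2) M12_E"
  then obtain l :: "mvtx \<Rightarrow> 'a" where "vertex_magic_labeling (M12_V p1 p2) M12_E l"
    unfolding vertex_magic_def by blast
  from M12_magic_labeling_necessary[OF assms this]
  show "p2 = 0 \<and> (\<exists>h::'a. involution h \<and> (\<exists>g1 g2::'a. g1 \<noteq> 0 \<and> g2 \<noteq> 0 \<and> g1 + g2 = h))"
    by blast
next
  assume "p2 = 0 \<and> (\<exists>h::'a. involution h \<and> (\<exists>g1 g2::'a. g1 \<noteq> 0 \<and> g2 \<noteq> 0 \<and> g1 + g2 = h))"
  then show "vertex_magic TYPE('a::ab_group_add) (M12_V p1 p2) M12_E"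
    using M12_magic_labeling_exists[OF assms] unfolding vertex_magic_def by blast
qed

end
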